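(* Let $K$ be a field of characteristic $p>0$ such that $K/k$ is a finitely generated field extension, where $k=\bigcap_{n\ge0}K^{p^n}$. Let $W$ be a subfield with $k\subseteq W\subseteq K$, and let $W_n=W\cdot K^{p^n}$. Then $\operatorname{Diff}_W(K)=\bigcup_{n\ge0}\operatorname{Diff}_{W_n}(K)$.
   Context: $\cdot$ denotes the compositum in $K$. For subfields $A\subseteq B$, $\operatorname{Diff}_A(B)$ is the union over $n\ge0$ of the sets of $A$-linear maps $D:B\to B$ with $[b_0,[b_1,[\ldots,[b_n,D]\ldots]]]=0$ for all $b_i\in B$ (elements acting by multiplication, $[X,Y]=XY-YX$). *)

theory Defs
  imports Main
begin

text \<open>The ambient field K is the type 'a :: field. Subfields are subsets of it.\<close>

definition is_subfield :: "'a::field set \<Rightarrow> bool" where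
  "is_subfield F \<longleftrightarrow> 0 \<in> F \<and> 1 \<in> F \<and>
     (\<forall>x\<in>F. \<forall>y\<in>F. x + y \<in> F \<and> x * y \<in> F) \<and>
     (\<forall>x\<in>F. - x \<in> F \<and> inverse x \<in> F)"

definition field_gen :: "'a::field set \<Rightarrow> 'a set" where
  "field_gen A = \<Inter> {F. is_subfield F \<and> A \<subseteq> F}"

definition compositum :: "'a::field set \<Rightarrow> 'a set \<Rightarrow> 'a set" where
  "compositum A B = field_gen (A \<union> B)"

definition frob_pow_field :: "nat \<Rightarrow> 'a::field set" where
  "frob_pow_field n = (\<lambda>x. x ^ (CHAR('a) ^ n)) ` UNIV"

definition perfect_core :: "'a::field set" where
  "perfect_core = (\<Inter>n. frob_pow_field n)"

definition fin_gen_over :: "'a::field set \<Rightarrow> bool" where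
  "fin_gen_over F \<longleftrightarrow> (\<exists>S. finite S \<and> field_gen (F \<union> S) = UNIV)"

definition lin_over :: "'a::field set \<Rightarrow> ('a \<Rightarrow> 'a) \<Rightarrow> bool" where
  "lin_over F D \<longleftrightarrow> (\<forall>x y. D (x + y) = D x + D y) \<and> (\<forall>a\<in>F. \<forall>x. D (a * x) = a * D x)"

definition mult_comm :: "'a::field \<Rightarrow> ('a \<Rightarrow> 'a) \<Rightarrow> ('a \<Rightarrow> 'a)" where
  "mult_comm b D = (\<lambda>x. b * D x - D (b * x))"

fun iter_comm :: "'a::field list \<Rightarrow> ('a \<Rightarrow> 'a) \<Rightarrow> ('a \<Rightarrow> 'a)" where
  "iter_comm [] D = D"
| "iter_comm (b # bs) D = mult_comm b (iter_comm bs D)"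

definition Diff :: "'a::field set \<Rightarrow> ('a \<Rightarrow> 'a) set" where
  "Diff F = {D. lin_over F D \<and>
      (\<exists>n::nat. \<forall>bs. length bs = Suc n \<longrightarrow> iter_comm bs D = (\<lambda>_. 0))}"

end

theory Submission
  imports Defs "HOL-Computational_Algebra.Primes"
begin

text \<open>Iterating the commutator with a single element c expands binomially,
  [c,[c,...,[c,D]...]] x = \<Sum>i. (k choose i) (-1)^i c^(k-i) D (c^i x),
  because left multiplication by c after D and before D commute.  In characteristic p
  the middle binomial coefficients of the p-th iterate vanish, so p^m-fold commutators
  with c are commutators with c^(p^m).  Hence an operator of order n commutes with every
  (p^n)-th power, i.e. it is linear over K^(p^n) as well as over W, and therefore over
  their compositum.\<close>

definition alt_binomial_sum :: "nat \<Rightarrow> 'a::comm_ring_1 \<Rightarrow> (nat \<Rightarrow> 'a) \<Rightarrow> 'a" where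
  "alt_binomial_sum k c u = (\<Sum>i\<le>k. of_nat (k choose i) * (-1)^i * c^(k-i) * u i)"

lemma alt_binomial_sum_Suc:
  "alt_binomial_sum (Suc k) c u =
     c * alt_binomial_sum k c u - alt_binomial_sum k c (\<lambda>i. u (Suc i))"
proof -
  have L: "alt_binomial_sum (Suc k) c u = c^(Suc k) * u 0 +
      (\<Sum>i\<le>k. (of_nat (k choose i) + of_nat (k choose Suc i)) * (-1)^(Suc i) * c^(k-i) * u (Suc i))"
    unfolding alt_binomial_sum_def by (subst sum.atMost_Suc_shift) simp
  have "c * alt_binomial_sum k c u = (\<Sum>i\<le>k. of_nat (k choose i) * (-1)^i * c^(Suc k-i) * u i)"
    unfolding alt_binomial_sum_def sum_distrib_left
    by (rule sum.cong) (auto simp: Suc_diff_le algebra_simps)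
  also have "\<dots> = (\<Sum>i\<le>Suc k. of_nat (k choose i) * (-1)^i * c^(Suc k-i) * u i)"
    by (simp add: binomial_eq_0)
  also have "\<dots> = c^(Suc k) * u 0 +
      (\<Sum>i\<le>k. of_nat (k choose Suc i) * (-1)^(Suc i) * c^(k-i) * u (Suc i))"
    by (subst sum.atMost_Suc_shift) simp
  finally have A: "c * alt_binomial_sum k c u = \<dots>" .
  have B: "- alt_binomial_sum k c (\<lambda>i. u (Suc i)) =
      (\<Sum>i\<le>k. of_nat (k choose i) * (-1)^(Suc i) * c^(k-i) * u (Suc i))"
    unfolding alt_binomial_sum_def sum_negf[symmetric] by (rule sum.cong) auto
  show ?thesis
    unfolding L diff_conv_add_uminus A B add.assoc sum.distrib[symmetric]
    by (intro arg_cong2[where f="(+)"] refl sum.cong) (simp_all add: ring_distribs)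
qed

lemma alt_binomial_sum_CHAR:
  fixes c :: "'a::field"
  assumes "CHAR('a) > 0"
  shows "alt_binomial_sum CHAR('a) c u = c ^ CHAR('a) * u 0 - u CHAR('a)"
proof -
  define p where "p = CHAR('a)"
  have "prime p" unfolding p_def using assms prime_CHAR_semidom by blast
  have minus_one_pow: "(-1)^p = (-1::'a)"
  proof (cases "p = 2")
    case True
    then show ?thesis using uminus_CHAR_2[of "1::'a"] p_def by simp
  next
    case False
    then have "p > 2" using prime_ge_2_nat[OF \<open>prime p\<close>] by simp
    then have "odd p" using prime_odd_nat[OF \<open>prime p\<close>] by simp
    then show ?thesis by (rule neg_one_odd_power)
  qed
  have "alt_binomial_sum p c u = (\<Sum>i\<in>{0,p}. of_nat (p choose i) * (-1)^i * c^(p-i) * u i)"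
    unfolding alt_binomial_sum_def
  proof (intro sum.mono_neutral_right ballI)
    fix i assume "i \<in> {..p} - {0, p}"
    then have "p dvd (p choose i)"
      using \<open>prime p\<close> by (intro dvd_choose_prime) auto
    then have "of_nat (p choose i) = (0 :: 'a)"
      unfolding p_def by (simp add: of_nat_eq_0_iff_char_dvd)
    then show "of_nat (p choose i) * (-1)^i * c ^ (p - i) * u i = 0"
      by simp
  qed auto
  also have "\<dots> = c^p * u 0 + (-1)^p * u p"
    using assms by (simp add: p_def)
  also have "\<dots> = c^p * u 0 - u p"
    unfolding minus_one_pow by simp
  finally show ?thesis unfolding p_def .
qed

lemma funpow_mult_comm_eq_alt_binomial_sum:
  fixes c :: "'a::field"
  shows "(mult_comm c ^^ k) D x = alt_binomial_sum k c (\<lambda>i. D (c^i * x))"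
proof (induction k arbitrary: x)
  case 0
  then show ?case by (simp add: alt_binomial_sum_def)
next
  case (Suc k)
  have "(mult_comm c ^^ Suc k) D x = c * (mult_comm c ^^ k) D x - (mult_comm c ^^ k) D (c * x)"
    by (simp add: mult_comm_def)
  also have "\<dots> = c * alt_binomial_sum k c (\<lambda>i. D (c^i * x))
                    - alt_binomial_sum k c (\<lambda>i. D (c^(Suc i) * x))"
    by (simp add: Suc.IH mult.assoc mult.left_commute)
  also have "\<dots> = alt_binomial_sum (Suc k) c (\<lambda>i. D (c^i * x))"
    by (simp add: alt_binomial_sum_Suc)
  finally show ?case .
qed

lemma funpow_mult_comm_CHAR:
  fixes c :: "'a::field"
  assumes "CHAR('a) > 0"
  shows "mult_comm c ^^ CHAR('a) = mult_comm (c ^ CHAR('a))"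
  by (intro ext)
     (simp add: funpow_mult_comm_eq_alt_binomial_sum alt_binomial_sum_CHAR[OF assms] mult_comm_def)

lemma funpow_mult_comm_CHAR_power:
  fixes c :: "'a::field"
  assumes "CHAR('a) > 0"
  shows "mult_comm c ^^ (CHAR('a) ^ m) = mult_comm (c ^ (CHAR('a) ^ m))"
proof (induction m)
  case 0
  then show ?case by simp
next
  case (Suc m)
  have "mult_comm c ^^ (CHAR('a) ^ Suc m) = (mult_comm c ^^ (CHAR('a) ^ m)) ^^ CHAR('a)"
    by (metis funpow_mult power_Suc2)
  also have "\<dots> = mult_comm ((c ^ (CHAR('a) ^ m)) ^ CHAR('a))"
    by (simp add: Suc.IH funpow_mult_comm_CHAR[OF assms])
  also have "\<dots> = mult_comm (c ^ (CHAR('a) ^ Suc m))"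
    by (simp only: power_mult[symmetric] power_Suc2)
  finally show ?case .
qed

lemma iter_comm_replicate: "iter_comm (replicate k c) D = (mult_comm c ^^ k) D"
  by (induction k) auto

lemma iter_comm_eq_0_if_longer:
  assumes "\<forall>bs. length bs = Suc n \<longrightarrow> iter_comm bs D = (\<lambda>_. 0)"
    and "length bs \<ge> Suc n"
  shows "iter_comm bs D = (\<lambda>_. 0)"
  using assms(2)
proof (induction bs)
  case Nil
  then show ?case by simp
next
  case (Cons b bs)
  show ?case
  proof (cases "length (b # bs) = Suc n")
    case True
    then show ?thesis using assms(1) by blast
  next
    case False
    then have "iter_comm bs D = (\<lambda>_. 0)" using Cons by simp
    then show ?thesis by (simp add: mult_comm_def)
  qed
qed

lemma Diff_commutes_with_frob_pow:
  fixes D :: "'a::field \<Rightarrow> 'a"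
  assumes "CHAR('a) > 0" and "D \<in> Diff F"
  shows "\<exists>n. \<forall>a \<in> frob_pow_field n. \<forall>x. D (a * x) = a * D x"
proof -
  obtain n where order: "\<forall>bs. length bs = Suc n \<longrightarrow> iter_comm bs D = (\<lambda>_. 0)"
    using assms(2) unfolding Diff_def by blast
  have "2 \<le> CHAR('a)"
    using assms(1) prime_CHAR_semidom prime_ge_2_nat by blast
  then have "Suc n \<le> CHAR('a) ^ n"
    using less_exp[of n] power_mono[of 2 "CHAR('a)" n] by linarith
  have "D (a * x) = a * D x" if "a \<in> frob_pow_field n" for a x
  proof -
    from that obtain c where a: "a = c ^ (CHAR('a) ^ n)"
      unfolding frob_pow_field_def by blast
    have "iter_comm (replicate (CHAR('a) ^ n) c) D = (\<lambda>_. 0)"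
      using iter_comm_eq_0_if_longer[OF order] \<open>Suc n \<le> CHAR('a) ^ n\<close> by simp
    then have "mult_comm a D = (\<lambda>_. 0)"
      unfolding iter_comm_replicate a funpow_mult_comm_CHAR_power[OF assms(1)] .
    then show ?thesis
      unfolding mult_comm_def by (metis eq_iff_diff_eq_0)
  qed
  then show ?thesis by blast
qed

lemma field_gen_upper: "A \<subseteq> field_gen A"
  unfolding field_gen_def by blast

lemma field_gen_least: "is_subfield F \<Longrightarrow> A \<subseteq> F \<Longrightarrow> field_gen A \<subseteq> F"
  unfolding field_gen_def by blast

lemma is_subfield_linear_scalars:
  fixes D :: "'a::field \<Rightarrow> 'a"
  assumes add: "\<forall>x y. D (x + y) = D x + D y"
  shows "is_subfield {a. \<forall>x. D (a * x) = a * D x}"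
proof -
  have D0: "D 0 = 0" using add by (metis add_cancel_right_right add_0)
  have Dneg: "D (- x) = - D x" for x
    using add[rule_format, of x "-x"] D0 by (simp add: eq_neg_iff_add_eq_0 add.commute)
  have Dinv: "D (inverse a * x) = inverse a * D x" if "\<forall>y. D (a * y) = a * D y" for a x
  proof (cases "a = 0")
    case True
    then show ?thesis using D0 by simp
  next
    case False
    have "a * D (inverse a * x) = D x"
      using that[rule_format, of "inverse a * x"] False by (simp add: mult.assoc[symmetric])
    then show ?thesis
      using False by (metis field_class.field_inverse mult.assoc mult_1)
  qed
  show ?thesis
    unfolding is_subfield_def using add D0 Dneg Dinv by (simp add: distrib_right mult.assoc)
qed

lemma Diff_antimono: "F \<subseteq> G \<Longrightarrow> Diff G \<subseteq> Diff F"
  unfolding Diff_def lin_over_def by blast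

lemma Diff_compositum:
  assumes "D \<in> Diff F" and "\<forall>a \<in> G. \<forall>x. D (a * x) = a * D x"
  shows "D \<in> Diff (compositum F G)"
proof -
  have add: "\<forall>x y. D (x + y) = D x + D y"
    using assms(1) unfolding Diff_def lin_over_def by blast
  have "compositum F G \<subseteq> {a. \<forall>x. D (a * x) = a * D x}"
    unfolding compositum_def
    using assms by (intro field_gen_least is_subfield_linear_scalars add)
                   (auto simp: Diff_def lin_over_def)
  then show ?thesis
    using assms(1) unfolding Diff_def lin_over_def by blast
qed

lemma Diff_eq_Union_Diff_compositum_frob_pow_field:
  fixes W :: "'a::field set"
  assumes "CHAR('a) > 0"
  shows "Diff W = (\<Union>n. Diff (compositum W (frob_pow_field n)))"
proof
  have "W \<subseteq> compositum W (frob_pow_field n)" for n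
    unfolding compositum_def using field_gen_upper by blast
  then show "(\<Union>n. Diff (compositum W (frob_pow_field n))) \<subseteq> Diff W"
    using Diff_antimono by blast
  show "Diff W \<subseteq> (\<Union>n. Diff (compositum W (frob_pow_field n)))"
  proof
    fix D assume "D \<in> Diff W"
    then obtain n where "\<forall>a \<in> frob_pow_field n. \<forall>x. D (a * x) = a * D x"
      using Diff_commutes_with_frob_pow[OF assms] by blast
    then show "D \<in> (\<Union>n. Diff (compositum W (frob_pow_field n)))"
      using Diff_compositum[OF \<open>D \<in> Diff W\<close>] by blast
  qed
qed

theorem lemmaL2:
  fixes W :: "'a::field set"
  assumes "CHAR('a) > 0"
    and "fin_gen_over (perfect_core :: 'a set)"
    and "is_subfield W"
    and "perfect_core \<subseteq> W"
  shows "Diff W = (\<Union>n. Diff (compositum W (frob_pow_field n)))"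
  using Diff_eq_Union_Diff_compositum_frob_pow_field[OF assms(1)] .

end
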